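(* Let $G$ be a non-abelian subgroup of $\mathcal{H}(n,\mathbb{C})$ with $\Lambda_G\not\subset\mathbb{R}$ and $G\not\subset\mathcal{SR}_n$. Then $G$ has no discrete orbit, i.e. for every $z\in\mathbb{C}^n$ the orbit $G(z)$ is not a discrete subset of $\mathbb{C}^n$.
   Context: $\mathcal{H}(n,\mathbb{C})$ is the group of all maps $z\mapsto\lambda z+b$ of $\mathbb{C}^n$ with $\lambda\in\mathbb{C}^*$, $b\in\mathbb{C}^n$ ($\lambda$ = ratio). $H_2=(\frac{\pi}{2}+\pi\mathbb{Z})\cup\pi\mathbb{Z}$, $F_2=\{e^{ix}:x\in H_2\}$, $H_3=(\frac{\pi}{3}+\pi\mathbb{Z})\cup(-\frac{\pi}{3}+\pi\mathbb{Z})\cup\pi\mathbb{Z}$, $F_3=\{e^{ix}:x\in H_3\}$; $\mathcal{S}_i\mathcal{R}_n=\{z\mapsto\lambda z+b:\lambda\in F_i, b\in\mathbb{C}^n\}$, $\mathcal{SR}_n=\mathcal{S}_2\mathcal{R}_n\cup\mathcal{S}_3\mathcal{R}_n$. $\Lambda_G$ is the set of ratios of elements of $G$, and $G(z)=\{f(z):f\in G\}$. *)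

theory Defs
  imports "HOL-Analysis.Analysis"
begin

definition affine_map :: "complex \<Rightarrow> complex ^ 'n \<Rightarrow> (complex ^ 'n \<Rightarrow> complex ^ 'n)" where
  "affine_map lam b = (\<lambda>z. lam *s z + b)"

definition Hgrp :: "(complex ^ 'n \<Rightarrow> complex ^ 'n) set" where
  "Hgrp = {affine_map lam b | lam b. lam \<noteq> 0}"

definition is_subgroup_H :: "(complex ^ 'n \<Rightarrow> complex ^ 'n) set \<Rightarrow> bool" where
  "is_subgroup_H G \<longleftrightarrow> G \<subseteq> Hgrp \<and> id \<in> G \<and> (\<forall>f\<in>G. \<forall>g\<in>G. f \<circ> g \<in> G)
      \<and> (\<forall>f\<in>G. \<exists>g\<in>G. f \<circ> g = id \<and> g \<circ> f = id)"

definition ratios :: "(complex ^ 'n \<Rightarrow> complex ^ 'n) set \<Rightarrow> complex set" where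
  "ratios G = {lam. \<exists>b. affine_map lam b \<in> G}"

definition H2 :: "real set" where
  "H2 = {pi/2 + pi * of_int k | k. True} \<union> {pi * of_int k | k. True}"

definition H3 :: "real set" where
  "H3 = {pi/3 + pi * of_int k | k. True} \<union> {- pi/3 + pi * of_int k | k. True}
        \<union> {pi * of_int k | k. True}"

definition F2 :: "complex set" where
  "F2 = {exp (\<i> * of_real x) | x. x \<in> H2}"

definition F3 :: "complex set" where
  "F3 = {exp (\<i> * of_real x) | x. x \<in> H3}"

definition S2R :: "(complex ^ 'n \<Rightarrow> complex ^ 'n) set" where
  "S2R = {affine_map lam b | lam b. lam \<in> F2}"

definition S3R :: "(complex ^ 'n \<Rightarrow> complex ^ 'n) set" where
  "S3R = {affine_map lam b | lam b. lam \<in> F3}"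

definition SR :: "(complex ^ 'n \<Rightarrow> complex ^ 'n) set" where
  "SR = S2R \<union> S3R"

definition orbit :: "(complex ^ 'n \<Rightarrow> complex ^ 'n) set \<Rightarrow> complex ^ 'n \<Rightarrow> (complex ^ 'n) set" where
  "orbit G z = {f z | f. f \<in> G}"

end

theory Submission
  imports Defs
begin

text \<open>
  Write the elements of G as affine maps z \<mapsto> \<lambda>z + b.
  (1) If f and g do not commute, the commutator-like element (f \<circ> g) \<circ> (g \<circ> f)\<inverse>
      has ratio 1, so G contains a non-trivial translation z \<mapsto> z + v.
  (2) The set T of coefficients x with z \<mapsto> z + x v in G is an additive group,
      and conjugating such a translation by an element of ratio \<mu> multiplies x by \<mu>.
      Hence the set of multipliers {q. q T \<subseteq> T} is closed under +, -, \<times> and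
      contains every ratio of G together with its inverse.
  (3) An element of G outside SR has a ratio \<mu> \<notin> F2 \<union> F3; an elementary case analysis
      on \<mu> shows that one of \<mu>, \<mu>\<inverse>, \<mu> - 1, \<mu> + 1, \<mu>^2 + 1 has modulus in ]0,1[.
  (4) Thus q^k v is a translation vector of G for some 0 < |q| < 1 and all k, so every
      point z of an orbit is accumulated by the points z + q^k v of the same orbit.
\<close>

lemma affine_map_comp:
  "affine_map a b \<circ> affine_map c d = affine_map (a * c) (a *s d + b)"
  by (rule ext) (simp add: affine_map_def vector_add_ldistrib scalar_mult_eq_scaleR
      algebra_simps vec_eq_iff)

lemma id_eq_affine_map: "id = affine_map 1 0"
  by (rule ext) (simp add: affine_map_def)

lemma affine_map_eq_iff: "affine_map a b = affine_map c d \<longleftrightarrow> a = c \<and> b = d"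
proof
  assume eq: "affine_map a b = affine_map c d"
  have "affine_map a b 0 = affine_map c d 0" using eq by simp
  hence bd: "b = d" by (simp add: affine_map_def)
  have "affine_map a b (\<chi> i. 1) $ undefined = affine_map c d (\<chi> i. 1) $ undefined"
    using eq by simp
  hence "a = c" using bd by (simp add: affine_map_def)
  thus "a = c \<and> b = d" using bd by simp
qed simp

lemma norm_vector_scalar_mult: "norm (c *s (v :: complex ^ 'n)) = cmod c * norm v"
  unfolding norm_vec_def by (simp add: L2_set_right_distrib norm_mult)

definition transl_coeffs :: "(complex ^ 'n \<Rightarrow> complex ^ 'n) set \<Rightarrow> complex ^ 'n \<Rightarrow> complex set"
  where "transl_coeffs G v = {x. affine_map 1 (x *s v) \<in> G}"

definition multipliers :: "(complex ^ 'n \<Rightarrow> complex ^ 'n) set \<Rightarrow> complex ^ 'n \<Rightarrow> complex set"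
  where "multipliers G v = {q. \<forall>x \<in> transl_coeffs G v. q * x \<in> transl_coeffs G v}"

context
  fixes G :: "(complex ^ 'n \<Rightarrow> complex ^ 'n) set"
  assumes G: "is_subgroup_H G"
begin

lemma subgroup_id: "id \<in> G"
  using G unfolding is_subgroup_H_def by blast

lemma subgroup_comp: "f \<in> G \<Longrightarrow> g \<in> G \<Longrightarrow> f \<circ> g \<in> G"
  using G unfolding is_subgroup_H_def by blast

lemma subgroup_elem: "f \<in> G \<Longrightarrow> \<exists>lam b. lam \<noteq> 0 \<and> f = affine_map lam b"
  using G unfolding is_subgroup_H_def Hgrp_def by blast

lemma subgroup_inverse:
  assumes "affine_map a b \<in> G"
  shows "affine_map (inverse a) (- (inverse a *s b)) \<in> G"
proof -
  obtain g where g: "g \<in> G" "affine_map a b \<circ> g = id"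
    using G assms unfolding is_subgroup_H_def by blast
  obtain a' b' where g_eq: "g = affine_map a' b'" using subgroup_elem[OF g(1)] by blast
  have "a * a' = 1" and b: "a *s b' + b = 0"
    using g(2) unfolding g_eq affine_map_comp id_eq_affine_map affine_map_eq_iff by auto
  hence a': "a' = inverse a" and "a \<noteq> 0" by (auto simp: inverse_unique)
  have "b' = - (inverse a *s b)"
    using b \<open>a \<noteq> 0\<close> by (simp add: vec_eq_iff field_simps add_eq_0_iff2)
  thus ?thesis using g(1) g_eq a' by simp
qed

lemma subgroup_noncommuting_translation:
  assumes "f \<in> G" "g \<in> G" "f \<circ> g \<noteq> g \<circ> f"
  obtains v where "v \<noteq> 0" "affine_map 1 v \<in> G"
proof -
  obtain a b c d where ab: "a \<noteq> 0" "f = affine_map a b" and cd: "c \<noteq> 0" "g = affine_map c d"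
    using subgroup_elem assms(1,2) by metis
  have fg: "f \<circ> g = affine_map (a * c) (a *s d + b)"
    and gf: "g \<circ> f = affine_map (a * c) (c *s b + d)"
    unfolding ab cd affine_map_comp by (simp_all add: mult.commute)
  define v where "v = (a *s d + b) - (c *s b + d)"
  have "v \<noteq> 0" using assms(3) unfolding fg gf v_def by (metis right_minus_eq)
  have "affine_map (inverse (a * c)) (- (inverse (a * c) *s (c *s b + d))) \<in> G"
    using subgroup_inverse subgroup_comp[OF assms(2,1)] gf by metis
  hence "(f \<circ> g) \<circ> affine_map (inverse (a * c)) (- (inverse (a * c) *s (c *s b + d))) \<in> G"
    using subgroup_comp subgroup_comp[OF assms(1,2)] by blast
  moreover have "(f \<circ> g) \<circ> affine_map (inverse (a * c)) (- (inverse (a * c) *s (c *s b + d)))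
      = affine_map 1 v"
    using ab(1) cd(1) unfolding fg affine_map_comp v_def
    by (simp add: affine_map_eq_iff vec_eq_iff field_simps)
  ultimately show ?thesis using \<open>v \<noteq> 0\<close> that by simp
qed

lemma transl_coeffs_add:
  assumes "x \<in> transl_coeffs G v" "y \<in> transl_coeffs G v"
  shows "x + y \<in> transl_coeffs G v"
proof -
  have "affine_map 1 (x *s v) \<circ> affine_map 1 (y *s v) = affine_map 1 ((x + y) *s v)"
    unfolding affine_map_comp by (simp add: vector_sadd_rdistrib add.commute)
  thus ?thesis using subgroup_comp assms unfolding transl_coeffs_def by fastforce
qed

lemma transl_coeffs_uminus:
  assumes "x \<in> transl_coeffs G v"
  shows "- x \<in> transl_coeffs G v"
  using subgroup_inverse[of 1 "x *s v"] assms unfolding transl_coeffs_def by simp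

text \<open>\<dots> which is stable under multiplication by every ratio of G, because conjugating
  z \<mapsto> z + x v by z \<mapsto> \<mu>z + b gives z \<mapsto> z + \<mu>x v.\<close>
lemma ratio_in_multipliers:
  assumes "\<mu> \<in> ratios G"
  shows "\<mu> \<in> multipliers G v"
  unfolding multipliers_def
proof (intro CollectI ballI)
  fix x assume x: "x \<in> transl_coeffs G v"
  obtain b where h: "affine_map \<mu> b \<in> G" using assms unfolding ratios_def by blast
  have "\<mu> \<noteq> 0" using subgroup_elem[OF h] by (auto simp: affine_map_eq_iff)
  have "(affine_map \<mu> b \<circ> affine_map 1 (x *s v)) \<circ> affine_map (inverse \<mu>) (- (inverse \<mu> *s b))
      \<in> G"
    using subgroup_comp subgroup_inverse h x unfolding transl_coeffs_def by blast
  moreover have "(affine_map \<mu> b \<circ> affine_map 1 (x *s v)) \<circ> affine_map (inverse \<mu>) (- (inverse \<mu> *s b))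
      = affine_map 1 ((\<mu> * x) *s v)"
    using \<open>\<mu> \<noteq> 0\<close> unfolding affine_map_comp by (simp add: affine_map_eq_iff vec_eq_iff field_simps)
  ultimately show "\<mu> * x \<in> transl_coeffs G v" unfolding transl_coeffs_def by simp
qed

lemma ratio_inverse: "\<mu> \<in> ratios G \<Longrightarrow> inverse \<mu> \<in> ratios G"
  using subgroup_inverse unfolding ratios_def by blast

lemma ratio_outside_SR:
  assumes "h \<in> G" "h \<notin> SR"
  obtains \<mu> where "\<mu> \<in> ratios G" "\<mu> \<noteq> 0" "\<mu> \<notin> F2 \<union> F3"
proof -
  obtain \<mu> b where "\<mu> \<noteq> 0" "h = affine_map \<mu> b" using subgroup_elem[OF assms(1)] by blast
  thus ?thesis using assms that unfolding ratios_def SR_def S2R_def S3R_def by blast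
qed

lemma orbit_self: "z \<in> orbit G z"
  using subgroup_id unfolding orbit_def by (metis (mono_tags, lifting) id_apply mem_Collect_eq)

lemma orbit_translate: "x \<in> transl_coeffs G v \<Longrightarrow> z + x *s v \<in> orbit G z"
  unfolding transl_coeffs_def orbit_def affine_map_def by force

end

lemma multipliers_add:
  assumes "is_subgroup_H G" "p \<in> multipliers G v" "q \<in> multipliers G v"
  shows "p + q \<in> multipliers G v"
  using transl_coeffs_add[OF assms(1)] assms(2,3) unfolding multipliers_def
  by (simp add: distrib_right)

lemma multipliers_diff:
  assumes G: "is_subgroup_H G" and "p \<in> multipliers G v" "q \<in> multipliers G v"
  shows "p - q \<in> multipliers G v"
  unfolding multipliers_def
proof (intro CollectI ballI)
  fix x assume "x \<in> transl_coeffs G v"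
  hence "p * x \<in> transl_coeffs G v" "- (q * x) \<in> transl_coeffs G v"
    using assms(2,3) transl_coeffs_uminus[OF G] unfolding multipliers_def by auto
  thus "(p - q) * x \<in> transl_coeffs G v"
    using transl_coeffs_add[OF G] by (metis left_diff_distrib diff_conv_add_uminus)
qed

lemma multipliers_mult:
  "p \<in> multipliers G v \<Longrightarrow> q \<in> multipliers G v \<Longrightarrow> p * q \<in> multipliers G v"
  unfolding multipliers_def by (simp add: mult.assoc)

lemma multipliers_one: "1 \<in> multipliers G v"
  unfolding multipliers_def by simp

lemma ratio_combinations_in_multipliers:
  assumes G: "is_subgroup_H G" and "\<mu> \<in> ratios G"
  shows "{\<mu>, inverse \<mu>, \<mu> - 1, \<mu> + 1, \<mu> * \<mu> + 1} \<subseteq> multipliers G v"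
proof -
  have "\<mu> \<in> multipliers G v" "inverse \<mu> \<in> multipliers G v"
    using ratio_in_multipliers[OF G] ratio_inverse[OF G] assms(2) by blast+
  thus ?thesis
    by (simp add: multipliers_one multipliers_add[OF G] multipliers_diff[OF G] multipliers_mult)
qed

lemma multiplier_powers_in_transl_coeffs:
  "q \<in> multipliers G v \<Longrightarrow> 1 \<in> transl_coeffs G v \<Longrightarrow> q ^ k \<in> transl_coeffs G v"
  by (induction k) (auto simp: multipliers_def)

text \<open>The angle sets H2 and H3 are symmetric, so F2 and F3 are closed under conjugation.\<close>
lemma H2_uminus: "x \<in> H2 \<Longrightarrow> - x \<in> H2"
  unfolding H2_def
proof (elim UnE CollectE exE conjE)
  fix k :: int
  assume "x = pi / 2 + pi * of_int k"
  hence "- x = pi / 2 + pi * of_int (- k - 1)" by (simp add: algebra_simps)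
  thus "- x \<in> {pi / 2 + pi * of_int k | k. True} \<union> {pi * of_int k | k. True}" by blast
next
  fix k :: int
  assume "x = pi * of_int k"
  hence "- x = pi * of_int (- k)" by simp
  thus "- x \<in> {pi / 2 + pi * of_int k | k. True} \<union> {pi * of_int k | k. True}" by blast
qed

lemma H3_uminus: "x \<in> H3 \<Longrightarrow> - x \<in> H3"
  unfolding H3_def
proof (elim UnE CollectE exE conjE)
  fix k :: int
  assume "x = pi / 3 + pi * of_int k"
  hence "- x = - pi / 3 + pi * of_int (- k)" by simp
  thus "- x \<in> {pi / 3 + pi * of_int k | k. True} \<union> {- pi / 3 + pi * of_int k | k. True}
        \<union> {pi * of_int k | k. True}" by blast
next
  fix k :: int
  assume "x = - pi / 3 + pi * of_int k"
  hence "- x = pi / 3 + pi * of_int (- k)" by simp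
  thus "- x \<in> {pi / 3 + pi * of_int k | k. True} \<union> {- pi / 3 + pi * of_int k | k. True}
        \<union> {pi * of_int k | k. True}" by blast
next
  fix k :: int
  assume "x = pi * of_int k"
  hence "- x = pi * of_int (- k)" by simp
  thus "- x \<in> {pi / 3 + pi * of_int k | k. True} \<union> {- pi / 3 + pi * of_int k | k. True}
        \<union> {pi * of_int k | k. True}" by blast
qed

lemma cis_in_F2: "x \<in> H2 \<Longrightarrow> cis x \<in> F2"
  unfolding F2_def cis_conv_exp by blast

lemma cis_in_F3: "x \<in> H3 \<Longrightarrow> cis x \<in> F3"
  unfolding F3_def cis_conv_exp by blast

lemma unit_circle_by_re:
  assumes "cmod \<mu> = 1" "Re \<mu> = cos x"
  shows "\<mu> = cis x \<or> \<mu> = cis (- x)"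
proof -
  have "(Re \<mu>)^2 + (Im \<mu>)^2 = 1" using assms(1) by (simp add: cmod_def)
  hence "(Im \<mu>)^2 = (sin x)^2" using assms(2) by (simp add: sin_squared_eq)
  hence "Im \<mu> = sin x \<or> Im \<mu> = - sin x" by (simp add: power2_eq_iff)
  thus ?thesis using assms(2) by (auto simp: complex_eq_iff)
qed

lemma unit_circle_special_points:
  assumes "cmod \<mu> = 1" "Re \<mu> \<in> {-1, -1/2, 0, 1/2, 1}"
  shows "\<mu> \<in> F2 \<union> F3"
proof -
  have angle: "\<exists>x. Re \<mu> = cos x \<and> (x \<in> H2 \<or> x \<in> H3)"
  proof -
    have "pi \<in> H2" "pi / 2 \<in> H2" "0 \<in> H2"
      unfolding H2_def by (auto intro: exI[of _ 1] exI[of _ 0])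
    moreover have "pi / 3 \<in> H3" "- pi / 3 + pi \<in> H3"
      unfolding H3_def by (auto intro: exI[of _ 1] exI[of _ 0])
    moreover have "cos (- pi / 3 + pi) = - 1 / 2"
      by (simp only: cos_add) (simp add: cos_60)
    ultimately show ?thesis using assms(2)
      by (metis cos_60 cos_pi cos_pi_half cos_zero empty_iff insert_iff)
  qed
  then obtain x where "Re \<mu> = cos x" "x \<in> H2 \<or> x \<in> H3" by blast
  thus ?thesis
    using unit_circle_by_re[OF assms(1)] H2_uminus H3_uminus cis_in_F2 cis_in_F3 by blast
qed

text \<open>Away from those points of the unit circle, |\<mu> - 1|^2 = 2 - 2 Re \<mu>,
  |\<mu> + 1|^2 = 2 + 2 Re \<mu> or |\<mu>^2 + 1| = 2 |Re \<mu>| is smaller than 1.\<close>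
lemma unit_circle_small_combination:
  assumes "cmod \<mu> = 1" "Re \<mu> \<notin> {-1, -1/2, 0, 1/2, 1}"
  shows "\<exists>q \<in> {\<mu> - 1, \<mu> + 1, \<mu> * \<mu> + 1}. q \<noteq> 0 \<and> cmod q < 1"
proof -
  have circle: "(Re \<mu>)^2 + (Im \<mu>)^2 = 1" using assms(1) by (simp add: cmod_def)
  consider "1/2 < Re \<mu>" | "Re \<mu> < - 1/2" | "\<bar>Re \<mu>\<bar> < 1/2" using assms(2) by force
  thus ?thesis
  proof cases
    case 1
    have "cmod (\<mu> - 1) ^ 2 = (Re \<mu> - 1)^2 + (Im \<mu>)^2" by (simp add: cmod_power2)
    also have "\<dots> = 2 - 2 * Re \<mu>" using circle by (simp add: power2_diff)
    finally have "cmod (\<mu> - 1) < 1" using 1 power2_less_imp_less[of "cmod (\<mu> - 1)" 1] by simp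
    moreover have "\<mu> - 1 \<noteq> 0" using assms(2) by auto
    ultimately show ?thesis by blast
  next
    case 2
    have "cmod (\<mu> + 1) ^ 2 = (Re \<mu> + 1)^2 + (Im \<mu>)^2" by (simp add: cmod_power2)
    also have "\<dots> = 2 + 2 * Re \<mu>" using circle by (simp add: power2_sum)
    finally have "cmod (\<mu> + 1) < 1" using 2 power2_less_imp_less[of "cmod (\<mu> + 1)" 1] by simp
    moreover have "\<mu> + 1 \<noteq> 0" using assms(2) by (auto simp: add_eq_0_iff2)
    ultimately show ?thesis by blast
  next
    case 3
    have "\<mu> * cnj \<mu> = 1" using assms(1) by (simp add: complex_norm_square[symmetric])
    moreover have "\<mu> * (2 * of_real (Re \<mu>)) = \<mu> * (\<mu> + cnj \<mu>)" by (simp add: complex_add_cnj)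
    ultimately have "\<mu> * \<mu> + 1 = \<mu> * (2 * of_real (Re \<mu>))" by (simp add: distrib_left)
    hence "cmod (\<mu> * \<mu> + 1) = 2 * \<bar>Re \<mu>\<bar>" using assms(1) by (simp add: norm_mult)
    moreover have "Re \<mu> \<noteq> 0" using assms(2) by auto
    ultimately show ?thesis using 3 by force
  qed
qed

text \<open>Step (3): a non-zero ratio outside F2 \<union> F3 yields a ring combination of modulus
  in ]0,1[ (off the unit circle, \<mu> or its inverse already does).\<close>
lemma small_ratio_combination:
  assumes "\<mu> \<noteq> 0" "\<mu> \<notin> F2 \<union> F3"
  shows "\<exists>q \<in> {\<mu>, inverse \<mu>, \<mu> - 1, \<mu> + 1, \<mu> * \<mu> + 1}. q \<noteq> 0 \<and> cmod q < 1"
proof (cases "cmod \<mu> = 1")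
  case True
  thus ?thesis
    using unit_circle_special_points unit_circle_small_combination assms(2) by blast
next
  case False
  hence "cmod \<mu> < 1 \<or> cmod (inverse \<mu>) < 1"
    by (auto simp: norm_inverse inverse_less_1_iff)
  thus ?thesis using assms(1) by auto
qed

lemma not_isolated_by_shrinking_translates:
  fixes z v :: "complex ^ 'n"
  assumes "v \<noteq> 0" "q \<noteq> 0" "cmod q < 1" "\<And>k. z + q ^ k *s v \<in> S"
  shows "\<not> z isolated_in S"
proof
  assume "z isolated_in S"
  then obtain e where e: "e > 0" "\<forall>y\<in>S. dist z y < e \<longrightarrow> y = z"
    unfolding isolated_in_dist_Ex_iff by blast
  have "norm v > 0" using assms(1) by simp
  then obtain k where k: "cmod q ^ k < e / norm v"
    using real_arch_pow_inv[OF _ assms(3)] e(1) by (metis divide_pos_pos)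
  have "dist z (z + q ^ k *s v) = cmod q ^ k * norm v"
    by (simp add: dist_norm norm_vector_scalar_mult norm_power)
  also have "\<dots> < e" using k \<open>norm v > 0\<close> by (simp add: pos_less_divide_eq)
  finally have "q ^ k *s v = 0" using e(2) assms(4) by force
  hence "cmod q ^ k * norm v = 0" by (metis norm_vector_scalar_mult norm_power norm_zero)
  thus False using assms(2) \<open>norm v > 0\<close> by simp
qed

theorem corollary1p3:
  fixes G :: "(complex ^ 'n \<Rightarrow> complex ^ 'n) set"
  assumes "is_subgroup_H G"
    and "\<exists>f\<in>G. \<exists>g\<in>G. f \<circ> g \<noteq> g \<circ> f"
    and "\<not> ratios G \<subseteq> \<real>"
    and "\<not> G \<subseteq> SR"
  shows "\<forall>z. \<not> discrete (orbit G z)"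
proof
  fix z
  obtain v where v: "v \<noteq> 0" "affine_map 1 v \<in> G"
    using subgroup_noncommuting_translation[OF assms(1)] assms(2) by blast
  have one: "1 \<in> transl_coeffs G v" using v(2) unfolding transl_coeffs_def by simp
  obtain \<mu> where \<mu>: "\<mu> \<in> ratios G" "\<mu> \<noteq> 0" "\<mu> \<notin> F2 \<union> F3"
    using ratio_outside_SR[OF assms(1)] assms(4) by blast
  obtain q where q: "q \<in> multipliers G v" "q \<noteq> 0" "cmod q < 1"
    using small_ratio_combination[OF \<mu>(2,3)] ratio_combinations_in_multipliers[OF assms(1) \<mu>(1)]
    by blast
  have "z + q ^ k *s v \<in> orbit G z" for k
    using orbit_translate[OF assms(1)] multiplier_powers_in_transl_coeffs[OF q(1) one] by blast
  hence "\<not> z isolated_in orbit G z"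
    using not_isolated_by_shrinking_translates v(1) q(2,3) by blast
  thus "\<not> discrete (orbit G z)"
    using discreteD orbit_self[OF assms(1)] by blast
qed

end
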